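(* In any finite ELP and for any policy $\pi$, let $Q_{\max}$ be any optimal solution of the problem: maximize $\mathbb E_\pi[Q(S_T,A_T)]$ over $Q\in\mathcal Q$ subject to $Q(s,a)\le\mathcal BQ(s,a)$ for all $(s,a)$ (a maximin Q-function of $\mathcal L_\pi$). Then $Q_{\max}$ is an optimal Q-function: every $Q_{\max}$-greedy policy $\mu$ satisfies $J(\mu)=\max_{\pi'}J(\pi')$.
   Context: A finite ELP is $(\mathcal S,\mathcal A,P,R,\rho)$ with finite $\mathcal S,\mathcal A$, reward $R:\mathcal S\to\mathbb R$, transitions $P(s'|s,a)$, distribution $\rho$, and nonempty terminal set $\mathcal S_\bot$. Under a policy $\pi$, $S_0$ is a fixed terminal state, $A_t\sim\pi(\cdot|S_t)$, $S_{t+1}\sim P(\cdot|S_t,A_t)$, and $T=\inf\{t\ge1:S_t\in\mathcal S_\bot\}$. ELP conditions: $\mathbb E_\pi[T]<\infty$ for every $\pi$; $P(s'|s,a)=\rho(s')$ for all $s\in\mathcal S_\bot$, all $a,s'$; every state is reachable under some policy. $J(\pi)=\mathbb E_\pi[\sum_{t=1}^TR(S_t)]$. $\mathcal Q$ = all functions $\mathcal S\times\mathcal A\to\mathbb R$. $\mathcal BQ(s,a)=\sum_{s'}P(s'|s,a)\big(R(s')+\mathbf 1[s'\notin\mathcal S_\bot]\max_{a'}Q(s',a')\big)$. A $Q$-greedy policy is a policy with $\mu(a|s)>0$ only if $Q(s,a)=\max_{\bar a}Q(s,\bar a)$. *)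

theory Defs
  imports Complex_Main "HOL-Library.FuncSet"
begin

(* P s a s' = P(s'|s,a), R : 's => real, rho : 's => real, Sbot = S_bot,
   s0 = the fixed terminal start state S_0.
   A (stationary, randomized) policy pi s a = pi(a|s). *)

definition stoch :: "('b::finite \<Rightarrow> real) \<Rightarrow> bool" where
  "stoch d \<longleftrightarrow> (\<forall>x. 0 \<le> d x) \<and> sum d UNIV = 1"

definition is_policy :: "('s::finite \<Rightarrow> 'a::finite \<Rightarrow> real) \<Rightarrow> bool" where
  "is_policy \<pi> \<longleftrightarrow> (\<forall>s. stoch (\<pi> s))"

definition paths :: "nat \<Rightarrow> (nat \<Rightarrow> 'b) set" where
  "paths n = Pi\<^sub>E {0..n} (\<lambda>_. UNIV)"

definition traj_w ::
  "('s \<Rightarrow> 'a \<Rightarrow> 's \<Rightarrow> real) \<Rightarrow> 's \<Rightarrow> ('s \<Rightarrow> 'a \<Rightarrow> real) \<Rightarrow> nat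
   \<Rightarrow> (nat \<Rightarrow> 's) \<Rightarrow> (nat \<Rightarrow> 'a) \<Rightarrow> real" where
  "traj_w P s0 \<pi> n ss as =
     (if ss 0 = s0 then 1 else 0)
     * (\<Prod>t<n. \<pi> (ss t) (as t) * P (ss t) (as t) (ss (Suc t)))
     * \<pi> (ss n) (as n)"

definition traj_exp ::
  "('s::finite \<Rightarrow> 'a::finite \<Rightarrow> 's \<Rightarrow> real) \<Rightarrow> 's \<Rightarrow> ('s \<Rightarrow> 'a \<Rightarrow> real) \<Rightarrow> nat
   \<Rightarrow> ((nat \<Rightarrow> 's) \<Rightarrow> (nat \<Rightarrow> 'a) \<Rightarrow> real) \<Rightarrow> real" where
  "traj_exp P s0 \<pi> n F =
     (\<Sum>ss\<in>paths n. \<Sum>as\<in>paths n. traj_w P s0 \<pi> n ss as * F ss as)"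

(* the event T = n, where T = inf {t >= 1. S_t in Sbot} *)
definition stops_at :: "'s set \<Rightarrow> nat \<Rightarrow> (nat \<Rightarrow> 's) \<Rightarrow> bool" where
  "stops_at Sbot n ss \<longleftrightarrow> 1 \<le> n \<and> (\<forall>t\<in>{1..<n}. ss t \<notin> Sbot) \<and> ss n \<in> Sbot"

definition prob_T_gt where
  "prob_T_gt P Sbot s0 \<pi> n =
     traj_exp P s0 \<pi> n (\<lambda>ss as. if \<forall>t\<in>{1..n}. ss t \<notin> Sbot then 1 else 0)"

(* E_pi[T] < infinity, via E[T] = sum_{n>=0} P(T > n) *)
definition finite_exp_T where
  "finite_exp_T P Sbot s0 \<pi> \<longleftrightarrow> summable (\<lambda>n. prob_T_gt P Sbot s0 \<pi> n)"

definition prob_state_at where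
  "prob_state_at P s0 \<pi> n s = traj_exp P s0 \<pi> n (\<lambda>ss as. if ss n = s then 1 else 0)"

definition is_ELP ::
  "('s::finite \<Rightarrow> 'a::finite \<Rightarrow> 's \<Rightarrow> real) \<Rightarrow> ('s \<Rightarrow> real) \<Rightarrow> 's set \<Rightarrow> 's \<Rightarrow> bool" where
  "is_ELP P \<rho> Sbot s0 \<longleftrightarrow>
     (\<forall>s a. stoch (P s a)) \<and> stoch \<rho> \<and> Sbot \<noteq> {} \<and> s0 \<in> Sbot
     \<and> (\<forall>\<pi>. is_policy \<pi> \<longrightarrow> finite_exp_T P Sbot s0 \<pi>)
     \<and> (\<forall>s\<in>Sbot. \<forall>a s'. P s a s' = \<rho> s')
     \<and> (\<forall>s. \<exists>\<pi> n. is_policy \<pi> \<and> prob_state_at P s0 \<pi> n s > 0)"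

definition J where
  "J P R Sbot s0 \<pi> =
     (\<Sum>n. traj_exp P s0 \<pi> n
        (\<lambda>ss as. if stops_at Sbot n ss then (\<Sum>t\<in>{1..n}. R (ss t)) else 0))"

definition L_obj where
  "L_obj P Sbot s0 \<pi> Q =
     (\<Sum>n. traj_exp P s0 \<pi> n
        (\<lambda>ss as. if stops_at Sbot n ss then Q (ss n) (as n) else 0))"

definition vmax :: "('s \<Rightarrow> 'a::finite \<Rightarrow> real) \<Rightarrow> 's \<Rightarrow> real" where
  "vmax Q s = Max (range (Q s))"

definition bellman ::
  "('s::finite \<Rightarrow> 'a::finite \<Rightarrow> 's \<Rightarrow> real) \<Rightarrow> ('s \<Rightarrow> real) \<Rightarrow> 's set
   \<Rightarrow> ('s \<Rightarrow> 'a \<Rightarrow> real) \<Rightarrow> 's \<Rightarrow> 'a \<Rightarrow> real" where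
  "bellman P R Sbot Q s a =
     (\<Sum>s'\<in>UNIV. P s a s' * (R s' + (if s' \<notin> Sbot then vmax Q s' else 0)))"

definition greedy :: "('s::finite \<Rightarrow> 'a::finite \<Rightarrow> real) \<Rightarrow> ('s \<Rightarrow> 'a \<Rightarrow> real) \<Rightarrow> bool" where
  "greedy Q \<mu> \<longleftrightarrow> is_policy \<mu> \<and> (\<forall>s a. \<mu> s a > 0 \<longrightarrow> Q s a = vmax Q s)"

end

theory Submission
  imports Defs
begin

text \<open>
  All terminal states share the transition law \<open>\<rho>\<close>, so on terminal states \<open>\<B>Q\<close> is the constant
  \<open>c(Q) = \<Sum>s'. \<rho> s' (R s' + [s' \<notin> S\<^sub>\<bottom>] max Q(s'))\<close>. As \<open>S\<^sub>T\<close> is terminal, this gives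
  \<open>L\<^sub>\<pi>(\<B>Q) = c(Q)\<close>, and \<open>L\<^sub>\<pi>(Q) \<le> c(Q)\<close> for every feasible \<open>Q\<close>. Since \<open>\<B>\<close> is monotone it
  preserves feasibility, so maximality of \<open>Q\<^sub>m\<^sub>a\<^sub>x\<close> yields
  \<open>c(\<B>\<^sup>n Q\<^sub>m\<^sub>a\<^sub>x) = L\<^sub>\<pi>(\<B>\<^sup>n\<^sup>+\<^sup>1 Q\<^sub>m\<^sub>a\<^sub>x) \<le> L\<^sub>\<pi>(Q\<^sub>m\<^sub>a\<^sub>x) \<le> c(Q\<^sub>m\<^sub>a\<^sub>x)\<close> for all \<open>n\<close>.

  Because \<open>\<EE>[T] < \<infinity>\<close>, the value \<open>J(\<sigma>)\<close> is the limit of the \<open>\<sigma>\<close>-averaged iterates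
  \<open>\<B>\<^sub>\<sigma>\<^sup>n Q\<close> at the terminal start state \<open>S\<^sub>0\<close>, for any \<open>Q\<close>. For an arbitrary policy these iterates
  are dominated by \<open>\<B>\<^sup>n Q\<^sub>m\<^sub>a\<^sub>x\<close>, whence \<open>J(\<pi>') \<le> c(Q\<^sub>m\<^sub>a\<^sub>x)\<close>. For a \<open>Q\<^sub>m\<^sub>a\<^sub>x\<close>-greedy \<open>\<mu>\<close> we
  have \<open>\<B>\<^sub>\<mu> Q\<^sub>m\<^sub>a\<^sub>x = \<B>Q\<^sub>m\<^sub>a\<^sub>x \<ge> Q\<^sub>m\<^sub>a\<^sub>x\<close>, so the iterates increase from their first value
  \<open>c(Q\<^sub>m\<^sub>a\<^sub>x)\<close> at \<open>S\<^sub>0\<close>, whence \<open>J(\<mu>) \<ge> c(Q\<^sub>m\<^sub>a\<^sub>x)\<close>.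
\<close>

lemma finite_paths [simp]: "finite (paths n :: (nat \<Rightarrow> 'b::finite) set)"
  unfolding paths_def by (simp add: finite_PiE)

lemma sum_paths_Suc:
  fixes f :: "(nat \<Rightarrow> 'b::finite) \<Rightarrow> real"
  shows "(\<Sum>x\<in>paths (Suc n). f x) = (\<Sum>g\<in>paths n. \<Sum>y\<in>UNIV. f (g(Suc n := y)))"
proof -
  let ?ext = "\<lambda>(y, g). g(Suc n := y)"
  have img: "paths (Suc n) = ?ext ` (UNIV \<times> (paths n :: (nat \<Rightarrow> 'b) set))"
    unfolding paths_def by (simp add: atLeast0_atMost_Suc PiE_insert_eq)
  have inj: "inj_on ?ext (UNIV \<times> (paths n :: (nat \<Rightarrow> 'b) set))"
    unfolding paths_def using inj_combinator[of "Suc n" "{0..n}" "\<lambda>_. UNIV"] by simp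
  have "(\<Sum>x\<in>paths (Suc n). f x) = (\<Sum>y\<in>UNIV. \<Sum>g\<in>paths n. f (g(Suc n := y)))"
    unfolding img sum.reindex[OF inj] by (simp add: sum.cartesian_product split_beta)
  then show ?thesis by (simp add: sum.swap[where A = UNIV])
qed

lemma sum_paths_0:
  fixes f :: "(nat \<Rightarrow> 'b::finite) \<Rightarrow> real"
  shows "(\<Sum>x\<in>paths 0. f x) = (\<Sum>y\<in>UNIV. f ((\<lambda>_. undefined)(0 := y)))"
proof -
  have "paths 0 = (\<lambda>y. (\<lambda>_. undefined)(0 := y)) ` (UNIV :: 'b set)"
    unfolding paths_def by (auto simp: PiE_def extensional_def fun_eq_iff image_iff)
  moreover have "inj (\<lambda>y::'b. (\<lambda>_::nat. undefined)(0 := y))"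
    by (rule injI) (metis fun_upd_same)
  ultimately show ?thesis by (simp add: sum.reindex)
qed

lemma traj_w_Suc:
  "traj_w P s0 \<sigma> (Suc n) (ss(Suc n := s')) (as(Suc n := a')) =
     traj_w P s0 \<sigma> n ss as * P (ss n) (as n) s' * \<sigma> s' a'"
proof -
  have "(\<Prod>t<n. \<sigma> ((ss(Suc n := s')) t) ((as(Suc n := a')) t)
            * P ((ss(Suc n := s')) t) ((as(Suc n := a')) t) ((ss(Suc n := s')) (Suc t)))
      = (\<Prod>t<n. \<sigma> (ss t) (as t) * P (ss t) (as t) (ss (Suc t)))"
    by (rule prod.cong) auto
  then show ?thesis unfolding traj_w_def by simp
qed

lemma summable_decseq_nat_mult_tendsto_0:
  fixes a :: "nat \<Rightarrow> real"
  assumes "summable a" and nonneg: "\<And>n. 0 \<le> a n" and "decseq a"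
  shows "(\<lambda>n. real n * a n) \<longlonglongrightarrow> 0"
proof -
  define S where "S n = (\<Sum>i<n. a i)" for n
  have S: "S \<longlonglongrightarrow> suminf a"
    unfolding S_def by (rule summable_LIMSEQ[OF \<open>summable a\<close>])
  have "filterlim (\<lambda>n::nat. n div 2) sequentially sequentially"
    unfolding filterlim_at_top eventually_sequentially
    by (metis div_le_mono nonzero_mult_div_cancel_left zero_neq_numeral)
  with S have S_half: "(\<lambda>n. S (n div 2)) \<longlonglongrightarrow> suminf a"
    by (rule filterlim_compose)
  have bound: "real n * a n \<le> 2 * (S n - S (n div 2))" for n
  proof -
    have "real n * a n \<le> 2 * (real (card {n div 2..<n}) * a n)"
      unfolding mult.assoc[symmetric] by (rule mult_right_mono) (simp_all add: nonneg)
    moreover have "real (card {n div 2..<n}) * a n \<le> sum a {n div 2..<n}"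
      by (rule sum_bounded_below) (use \<open>decseq a\<close> in \<open>auto simp: decseq_def\<close>)
    moreover have "sum a {n div 2..<n} = S n - S (n div 2)"
      unfolding S_def using sum_diff_nat_ivl[of 0 "n div 2" n a] by (simp add: atLeast0LessThan)
    ultimately show ?thesis by (metis mult_left_mono order_trans zero_le_numeral)
  qed
  have "(\<lambda>n. 2 * (S n - S (n div 2))) \<longlonglongrightarrow> 2 * (suminf a - suminf a)"
    by (intro tendsto_intros S S_half)
  then have "(\<lambda>n. 2 * (S n - S (n div 2))) \<longlonglongrightarrow> 0"
    by simp
  then show ?thesis
    by (rule tendsto_sandwich[of "\<lambda>_. 0" _ _ "\<lambda>n. 2 * (S n - S (n div 2))", rotated 3])
       (use bound nonneg in auto)
qed

lemma abs_le_sum_abs: "\<bar>f x\<bar> \<le> (\<Sum>y\<in>UNIV. \<bar>f (y::'b::finite)\<bar> :: real)"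
  by (rule member_le_sum) auto

lemma policy_nonneg: "is_policy \<sigma> \<Longrightarrow> 0 \<le> \<sigma> s a"
  unfolding is_policy_def stoch_def by auto

lemma sum_policy: "is_policy \<sigma> \<Longrightarrow> (\<Sum>a\<in>UNIV. \<sigma> s a) = 1"
  unfolding is_policy_def stoch_def by auto

lemma sum_policy_mult_const: "is_policy \<sigma> \<Longrightarrow> (\<Sum>a\<in>UNIV. \<sigma> s a * c) = c"
  by (simp add: sum_distrib_right[symmetric] sum_policy)

lemma vmax_ge: "Q s a \<le> vmax Q s"
  unfolding vmax_def by (rule Max_ge) auto

lemma vmax_mono: "(\<And>a. Q s a \<le> Q' s a) \<Longrightarrow> vmax Q s \<le> vmax Q' s"
  unfolding vmax_def[of Q] using vmax_ge[of Q' s] by (auto intro: order_trans simp: Max_le_iff)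

lemma sum_policy_mult_le_vmax:
  assumes "is_policy \<sigma>"
  shows "(\<Sum>a\<in>UNIV. \<sigma> s a * Q s a) \<le> vmax Q s"
proof -
  have "(\<Sum>a\<in>UNIV. \<sigma> s a * Q s a) \<le> (\<Sum>a\<in>UNIV. \<sigma> s a * vmax Q s)"
    by (intro sum_mono mult_left_mono vmax_ge policy_nonneg assms)
  then show ?thesis by (simp add: sum_policy_mult_const[OF assms])
qed

lemma sum_greedy_mult_eq_vmax:
  assumes "greedy Q \<mu>"
  shows "(\<Sum>a\<in>UNIV. \<mu> s a * Q s a) = vmax Q s"
proof -
  have policy: "is_policy \<mu>"
    using assms unfolding greedy_def by simp
  have "\<mu> s a * Q s a = \<mu> s a * vmax Q s" for a
    using assms policy_nonneg[OF policy, of s a] unfolding greedy_def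
    by (cases "\<mu> s a = 0") auto
  then have "(\<Sum>a\<in>UNIV. \<mu> s a * Q s a) = (\<Sum>a\<in>UNIV. \<mu> s a * vmax Q s)"
    by (rule sum.cong[OF refl])
  then show ?thesis by (simp only: sum_policy_mult_const[OF policy])
qed

definition cum_reward :: "('s \<Rightarrow> real) \<Rightarrow> nat \<Rightarrow> (nat \<Rightarrow> 's) \<Rightarrow> real" where
  "cum_reward R n ss = (\<Sum>t\<in>{1..n}. R (ss t))"

lemma cum_reward_0 [simp]: "cum_reward R 0 ss = 0"
  unfolding cum_reward_def by simp

lemma cum_reward_Suc: "cum_reward R (Suc n) (ss(Suc n := s')) = cum_reward R n ss + R s'"
proof -
  have "(\<Sum>t\<in>{1..n}. R ((ss(Suc n := s')) t)) = (\<Sum>t\<in>{1..n}. R (ss t))"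
    by (rule sum.cong) auto
  then show ?thesis unfolding cum_reward_def by simp
qed

lemma cum_reward_abs_le: "\<bar>cum_reward R n ss\<bar> \<le> real n * (\<Sum>s\<in>UNIV. \<bar>R (s::'s::finite)\<bar>)"
proof -
  have "\<bar>cum_reward R n ss\<bar> \<le> (\<Sum>t\<in>{1..n}. \<bar>R (ss t)\<bar>)"
    unfolding cum_reward_def by (rule sum_abs)
  also have "\<dots> \<le> real (card {1..n}) * (\<Sum>s\<in>UNIV. \<bar>R s\<bar>)"
    by (rule sum_bounded_above) (rule abs_le_sum_abs)
  finally show ?thesis by simp
qed

locale episodic_mdp =
  fixes P :: "'s::finite \<Rightarrow> 'a::finite \<Rightarrow> 's \<Rightarrow> real" and Sbot :: "'s set" and s0 :: 's
  assumes stoch_P: "\<And>s a. stoch (P s a)"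
begin

lemma P_nonneg: "0 \<le> P s a s'"
  using stoch_P[of s a] unfolding stoch_def by auto

lemma sum_P: "(\<Sum>s'\<in>UNIV. P s a s') = 1"
  using stoch_P[of s a] unfolding stoch_def by auto

lemma sum_P_policy: "is_policy \<sigma> \<Longrightarrow> (\<Sum>s'\<in>UNIV. \<Sum>a'\<in>UNIV. P s a s' * \<sigma> s' a') = 1"
  by (simp add: sum_distrib_left[symmetric] sum_policy sum_P)

lemma traj_w_nonneg: "is_policy \<sigma> \<Longrightarrow> 0 \<le> traj_w P s0 \<sigma> n ss as"
  unfolding traj_w_def by (intro mult_nonneg_nonneg prod_nonneg) (auto simp: P_nonneg policy_nonneg)

lemma traj_exp_cong:
  "(\<And>ss as. F ss as = G ss as) \<Longrightarrow> traj_exp P s0 \<sigma> n F = traj_exp P s0 \<sigma> n G"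
  by (simp add: traj_exp_def)

lemma traj_exp_add:
  "traj_exp P s0 \<sigma> n (\<lambda>ss as. F ss as + G ss as) = traj_exp P s0 \<sigma> n F + traj_exp P s0 \<sigma> n G"
  unfolding traj_exp_def by (simp add: distrib_left sum.distrib)

lemma traj_exp_cmult:
  "traj_exp P s0 \<sigma> n (\<lambda>ss as. c * F ss as) = c * traj_exp P s0 \<sigma> n F"
  unfolding traj_exp_def by (simp add: sum_distrib_left mult_ac)

lemma traj_exp_mono:
  assumes "is_policy \<sigma>" "\<And>ss as. F ss as \<le> G ss as"
  shows "traj_exp P s0 \<sigma> n F \<le> traj_exp P s0 \<sigma> n G"
  unfolding traj_exp_def by (intro sum_mono mult_left_mono assms traj_w_nonneg)

lemma traj_exp_abs_le:
  assumes "is_policy \<sigma>" "\<And>ss as. \<bar>F ss as\<bar> \<le> G ss as"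
  shows "\<bar>traj_exp P s0 \<sigma> n F\<bar> \<le> traj_exp P s0 \<sigma> n G"
proof -
  have "traj_exp P s0 \<sigma> n F \<le> traj_exp P s0 \<sigma> n G"
    using assms by (intro traj_exp_mono) (auto simp: abs_le_iff)
  moreover have "traj_exp P s0 \<sigma> n (\<lambda>ss as. (-1) * G ss as) \<le> traj_exp P s0 \<sigma> n F"
  proof (rule traj_exp_mono)
    show "(-1) * G ss as \<le> F ss as" for ss as
      using assms(2)[of ss as] by linarith
  qed (rule assms(1))
  ultimately show ?thesis unfolding traj_exp_cmult by linarith
qed

lemma traj_exp_0:
  assumes "\<And>ss as. F ss as = f (ss 0) (as 0)"
  shows "traj_exp P s0 \<sigma> 0 F = (\<Sum>a\<in>UNIV. \<sigma> s0 a * f s0 a)"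
proof -
  have "(\<Sum>a\<in>UNIV. (if s = s0 then 1 else 0) * \<sigma> s a * f s a) =
          (if s = s0 then \<Sum>a\<in>UNIV. \<sigma> s0 a * f s0 a else 0)" for s
    by simp
  then show ?thesis
    unfolding traj_exp_def traj_w_def sum_paths_0 assms by simp
qed

lemma traj_exp_Suc:
  "traj_exp P s0 \<sigma> (Suc n) F = traj_exp P s0 \<sigma> n (\<lambda>ss as. \<Sum>s'\<in>UNIV. \<Sum>a'\<in>UNIV.
      P (ss n) (as n) s' * \<sigma> s' a' * F (ss(Suc n := s')) (as(Suc n := a')))"
proof -
  have "traj_exp P s0 \<sigma> (Suc n) F = (\<Sum>ss\<in>paths n. \<Sum>s'\<in>UNIV. \<Sum>as\<in>paths n. \<Sum>a'\<in>UNIV.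
       traj_w P s0 \<sigma> n ss as * P (ss n) (as n) s' * \<sigma> s' a' * F (ss(Suc n := s')) (as(Suc n := a')))"
    unfolding traj_exp_def sum_paths_Suc traj_w_Suc by simp
  also have "\<dots> = (\<Sum>ss\<in>paths n. \<Sum>as\<in>paths n. traj_w P s0 \<sigma> n ss as * (\<Sum>s'\<in>UNIV. \<Sum>a'\<in>UNIV.
       P (ss n) (as n) s' * \<sigma> s' a' * F (ss(Suc n := s')) (as(Suc n := a'))))"
    by (rule sum.cong[OF refl], subst sum.swap) (simp add: sum_distrib_left mult.assoc)
  finally show ?thesis unfolding traj_exp_def .
qed

lemma traj_exp_Suc_eq:
  assumes "is_policy \<sigma>" "\<And>ss as s' a'. F (ss(Suc n := s')) (as(Suc n := a')) = G ss as"
  shows "traj_exp P s0 \<sigma> (Suc n) F = traj_exp P s0 \<sigma> n G"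
  unfolding traj_exp_Suc assms(2)
  by (simp add: sum_distrib_right[symmetric] sum_P_policy[OF assms(1)])

lemma traj_exp_1: "is_policy \<sigma> \<Longrightarrow> traj_exp P s0 \<sigma> n (\<lambda>_ _. 1) = 1"
proof (induction n)
  case 0
  then show ?case by (simp add: traj_exp_0[where f = "\<lambda>_ _. 1"] sum_policy)
next
  case (Suc n)
  then show ?case by (simp add: traj_exp_Suc_eq[where G = "\<lambda>_ _. 1"])
qed

definition survives :: "nat \<Rightarrow> (nat \<Rightarrow> 's) \<Rightarrow> bool" where
  "survives n ss \<longleftrightarrow> (\<forall>t\<in>{1..n}. ss t \<notin> Sbot)"

definition stopped_exp ::
  "('s \<Rightarrow> 'a \<Rightarrow> real) \<Rightarrow> (nat \<Rightarrow> (nat \<Rightarrow> 's) \<Rightarrow> (nat \<Rightarrow> 'a) \<Rightarrow> real) \<Rightarrow> nat \<Rightarrow> real" where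
  "stopped_exp \<sigma> F n = traj_exp P s0 \<sigma> n (\<lambda>ss as. if stops_at Sbot n ss then F n ss as else 0)"

definition prob_T_eq :: "('s \<Rightarrow> 'a \<Rightarrow> real) \<Rightarrow> nat \<Rightarrow> real" where
  "prob_T_eq \<sigma> n = stopped_exp \<sigma> (\<lambda>_ _ _. 1) n"

lemma prob_T_gt_survives:
  "prob_T_gt P Sbot s0 \<sigma> n = traj_exp P s0 \<sigma> n (\<lambda>ss as. if survives n ss then 1 else 0)"
  unfolding prob_T_gt_def survives_def ..

lemma J_eq_suminf_stopped_exp:
  "J P R Sbot s0 \<sigma> = suminf (stopped_exp \<sigma> (\<lambda>n ss as. cum_reward R n ss))"
  unfolding J_def stopped_exp_def cum_reward_def ..

lemma L_obj_eq_suminf_stopped_exp: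
  "L_obj P Sbot s0 \<sigma> Q = suminf (stopped_exp \<sigma> (\<lambda>n ss as. Q (ss n) (as n)))"
  unfolding L_obj_def stopped_exp_def ..

lemma survives_0 [simp]: "survives 0 ss"
  unfolding survives_def by simp

lemma not_stops_at_0 [simp]: "\<not> stops_at Sbot 0 ss"
  unfolding stops_at_def by simp

lemma survives_Suc: "survives (Suc n) (ss(Suc n := s')) \<longleftrightarrow> survives n ss \<and> s' \<notin> Sbot"
  unfolding survives_def by (auto simp: atLeastAtMostSuc_conv)

lemma stops_at_Suc: "stops_at Sbot (Suc n) (ss(Suc n := s')) \<longleftrightarrow> survives n ss \<and> s' \<in> Sbot"
  unfolding survives_def stops_at_def by auto

lemma stopped_exp_abs_le:
  assumes "is_policy \<sigma>" "\<And>ss as. stops_at Sbot n ss \<Longrightarrow> \<bar>F n ss as\<bar> \<le> M"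
  shows "\<bar>stopped_exp \<sigma> F n\<bar> \<le> M * prob_T_eq \<sigma> n"
proof -
  have "\<bar>stopped_exp \<sigma> F n\<bar>
      \<le> traj_exp P s0 \<sigma> n (\<lambda>ss as. M * (if stops_at Sbot n ss then 1 else 0))"
    unfolding stopped_exp_def by (rule traj_exp_abs_le) (use assms in auto)
  then show ?thesis
    unfolding traj_exp_cmult prob_T_eq_def stopped_exp_def .
qed

lemma stopped_exp_le:
  assumes "is_policy \<sigma>" "\<And>ss as. stops_at Sbot n ss \<Longrightarrow> F n ss as \<le> c"
  shows "stopped_exp \<sigma> F n \<le> c * prob_T_eq \<sigma> n"
proof -
  have "stopped_exp \<sigma> F n
      \<le> traj_exp P s0 \<sigma> n (\<lambda>ss as. c * (if stops_at Sbot n ss then 1 else 0))"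
    unfolding stopped_exp_def by (rule traj_exp_mono) (use assms in auto)
  then show ?thesis
    unfolding traj_exp_cmult prob_T_eq_def stopped_exp_def .
qed

lemma prob_T_eq_nonneg: "is_policy \<sigma> \<Longrightarrow> 0 \<le> prob_T_eq \<sigma> n"
  using traj_exp_mono[of \<sigma> "\<lambda>_ _. 0"]
  unfolding prob_T_eq_def stopped_exp_def by (simp add: traj_exp_def)

lemma prob_T_gt_nonneg: "is_policy \<sigma> \<Longrightarrow> 0 \<le> prob_T_gt P Sbot s0 \<sigma> n"
  using traj_exp_mono[of \<sigma> "\<lambda>_ _. 0"]
  unfolding prob_T_gt_survives by (simp add: traj_exp_def)

lemma prob_T_eq_0: "prob_T_eq \<sigma> 0 = 0"
  unfolding prob_T_eq_def stopped_exp_def by (simp add: traj_exp_def)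

lemma prob_T_gt_0: "is_policy \<sigma> \<Longrightarrow> prob_T_gt P Sbot s0 \<sigma> 0 = 1"
  unfolding prob_T_gt_survives by (simp add: traj_exp_1)

lemma prob_T_gt_Suc:
  "is_policy \<sigma> \<Longrightarrow>
     prob_T_gt P Sbot s0 \<sigma> (Suc n) + prob_T_eq \<sigma> (Suc n) = prob_T_gt P Sbot s0 \<sigma> n"
  unfolding prob_T_gt_survives prob_T_eq_def stopped_exp_def traj_exp_add[symmetric]
  by (rule traj_exp_Suc_eq) (auto simp: survives_Suc stops_at_Suc)

lemma decseq_prob_T_gt: "is_policy \<sigma> \<Longrightarrow> decseq (prob_T_gt P Sbot s0 \<sigma>)"
  using prob_T_gt_Suc prob_T_eq_nonneg by (intro decseq_SucI) (smt (verit))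

lemma sum_prob_T_eq:
  "is_policy \<sigma> \<Longrightarrow> (\<Sum>n<Suc N. prob_T_eq \<sigma> n) = 1 - prob_T_gt P Sbot s0 \<sigma> N"
proof (induction N)
  case 0
  then show ?case by (simp add: prob_T_eq_0 prob_T_gt_0)
next
  case (Suc N)
  then show ?case using prob_T_gt_Suc[of \<sigma> N] by simp
qed

lemma sum_nat_mult_prob_T_eq:
  "is_policy \<sigma> \<Longrightarrow> (\<Sum>n<Suc N. real n * prob_T_eq \<sigma> n)
     = (\<Sum>k<N. prob_T_gt P Sbot s0 \<sigma> k) - real N * prob_T_gt P Sbot s0 \<sigma> N"
proof (induction N)
  case 0
  then show ?case by simp
next
  case (Suc N)
  have "real (Suc N) * prob_T_eq \<sigma> (Suc N)
      = real (Suc N) * (prob_T_gt P Sbot s0 \<sigma> N - prob_T_gt P Sbot s0 \<sigma> (Suc N))"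
    using prob_T_gt_Suc[OF Suc.prems, of N] by simp
  then show ?case using Suc by (simp add: algebra_simps)
qed

context
  fixes \<sigma> :: "'s \<Rightarrow> 'a \<Rightarrow> real"
  assumes policy: "is_policy \<sigma>" and finite_T: "finite_exp_T P Sbot s0 \<sigma>"
begin

lemma summable_prob_T_gt: "summable (prob_T_gt P Sbot s0 \<sigma>)"
  using finite_T unfolding finite_exp_T_def .

lemma prob_T_gt_tendsto_0: "prob_T_gt P Sbot s0 \<sigma> \<longlonglongrightarrow> 0"
  using summable_prob_T_gt by (rule summable_LIMSEQ_zero)

lemma nat_mult_prob_T_gt_tendsto_0: "(\<lambda>n. real n * prob_T_gt P Sbot s0 \<sigma> n) \<longlonglongrightarrow> 0"
  using summable_prob_T_gt prob_T_gt_nonneg[OF policy] decseq_prob_T_gt[OF policy]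
  by (rule summable_decseq_nat_mult_tendsto_0)

lemma prob_T_eq_sums_1: "prob_T_eq \<sigma> sums 1"
proof -
  have "(\<lambda>N. 1 - prob_T_gt P Sbot s0 \<sigma> N) \<longlonglongrightarrow> 1 - 0"
    by (intro tendsto_intros prob_T_gt_tendsto_0)
  then have "(\<lambda>N. \<Sum>n<Suc N. prob_T_eq \<sigma> n) \<longlonglongrightarrow> 1"
    unfolding sum_prob_T_eq[OF policy] by simp
  then show ?thesis
    unfolding sums_def by (rule LIMSEQ_imp_Suc)
qed

lemma summable_nat_mult_prob_T_eq: "summable (\<lambda>n. real n * prob_T_eq \<sigma> n)"
proof (rule summableI_nonneg_bounded)
  show "0 \<le> real n * prob_T_eq \<sigma> n" for n
    using prob_T_eq_nonneg[OF policy] by simp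
  show "(\<Sum>i<n. real i * prob_T_eq \<sigma> i) \<le> suminf (prob_T_gt P Sbot s0 \<sigma>)" for n
  proof (cases n)
    case 0
    then show ?thesis
      using summable_prob_T_gt prob_T_gt_nonneg[OF policy] by (simp add: suminf_nonneg)
  next
    case (Suc N)
    have "(\<Sum>k<N. prob_T_gt P Sbot s0 \<sigma> k) \<le> suminf (prob_T_gt P Sbot s0 \<sigma>)"
      using summable_prob_T_gt prob_T_gt_nonneg[OF policy] by (intro sum_le_suminf) auto
    moreover have "0 \<le> real N * prob_T_gt P Sbot s0 \<sigma> N"
      using prob_T_gt_nonneg[OF policy] by simp
    ultimately show ?thesis
      unfolding Suc sum_nat_mult_prob_T_eq[OF policy] by linarith
  qed
qed

lemma summable_stopped_exp:
  assumes "\<And>n ss as. stops_at Sbot n ss \<Longrightarrow> \<bar>F n ss as\<bar> \<le> c * real n + d"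
  shows "summable (stopped_exp \<sigma> F)"
proof (rule summable_comparison_test')
  show "summable (\<lambda>n. c * (real n * prob_T_eq \<sigma> n) + d * prob_T_eq \<sigma> n)"
    using summable_add[OF summable_mult summable_mult,
        OF summable_nat_mult_prob_T_eq sums_summable[OF prob_T_eq_sums_1]] .
  show "norm (stopped_exp \<sigma> F n) \<le> c * (real n * prob_T_eq \<sigma> n) + d * prob_T_eq \<sigma> n" for n
    using stopped_exp_abs_le[OF policy assms, of n] by (simp add: algebra_simps)
qed

end

definition policy_bellman ::
  "('s \<Rightarrow> 'a \<Rightarrow> real) \<Rightarrow> ('s \<Rightarrow> real) \<Rightarrow> ('s \<Rightarrow> 'a \<Rightarrow> real) \<Rightarrow> 's \<Rightarrow> 'a \<Rightarrow> real" where
  "policy_bellman \<sigma> R H s a =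
     (\<Sum>s'\<in>UNIV. P s a s' * (R s' + (if s' \<notin> Sbot then (\<Sum>a'\<in>UNIV. \<sigma> s' a' * H s' a') else 0)))"

definition truncated_value ::
  "('s \<Rightarrow> 'a \<Rightarrow> real) \<Rightarrow> ('s \<Rightarrow> real) \<Rightarrow> ('s \<Rightarrow> 'a \<Rightarrow> real) \<Rightarrow> nat \<Rightarrow> real" where
  "truncated_value \<sigma> R H k =
     traj_exp P s0 \<sigma> k (\<lambda>ss as. if survives k ss then cum_reward R k ss + H (ss k) (as k) else 0)"

lemma expected_step_eq_policy_bellman:
  assumes "is_policy \<sigma>"
  shows "(\<Sum>s'\<in>UNIV. \<Sum>a'\<in>UNIV. P s a s' * \<sigma> s' a' * (c + R s' + (if s' \<notin> Sbot then H s' a' else 0)))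
         = c + policy_bellman \<sigma> R H s a"
proof -
  have inner: "(\<Sum>a'\<in>UNIV. P s a s' * \<sigma> s' a' * (c + R s' + (if s' \<notin> Sbot then H s' a' else 0)))
      = P s a s' * c + P s a s' * (R s' + (if s' \<notin> Sbot then (\<Sum>a'\<in>UNIV. \<sigma> s' a' * H s' a') else 0))"
    for s'
  proof -
    have "(\<Sum>a'\<in>UNIV. P s a s' * \<sigma> s' a' * (c + R s' + (if s' \<notin> Sbot then H s' a' else 0)))
       = P s a s' * ((\<Sum>a'\<in>UNIV. \<sigma> s' a' * (c + R s'))
            + (if s' \<notin> Sbot then (\<Sum>a'\<in>UNIV. \<sigma> s' a' * H s' a') else 0))"
      by (simp add: sum_distrib_left sum.distrib algebra_simps)
    also have "(\<Sum>a'\<in>UNIV. \<sigma> s' a' * (c + R s')) = c + R s'"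
      by (rule sum_policy_mult_const[OF assms])
    finally show ?thesis
      by (simp add: algebra_simps)
  qed
  show ?thesis
    unfolding inner sum.distrib policy_bellman_def
    by (simp add: sum_distrib_right[symmetric] sum_P)
qed

lemma truncated_value_0: "truncated_value \<sigma> R H 0 = (\<Sum>a\<in>UNIV. \<sigma> s0 a * H s0 a)"
  unfolding truncated_value_def by (rule traj_exp_0) simp

\<comment> \<open>A surviving episode either stops at time k + 1, collecting its return, or survives once more
  and collects H: averaged over the step this is the policy's Bellman operator applied to H.\<close>
lemma truncated_value_Suc:
  assumes "is_policy \<sigma>"
  shows "stopped_exp \<sigma> (\<lambda>n ss as. cum_reward R n ss) (Suc k) + truncated_value \<sigma> R H (Suc k)
       = truncated_value \<sigma> R (policy_bellman \<sigma> R H) k"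
proof -
  have step: "(\<Sum>s'\<in>UNIV. \<Sum>a'\<in>UNIV. P (ss k) (as k) s' * \<sigma> s' a' *
        ((if stops_at Sbot (Suc k) (ss(Suc k := s')) then cum_reward R (Suc k) (ss(Suc k := s')) else 0)
       + (if survives (Suc k) (ss(Suc k := s')) then cum_reward R (Suc k) (ss(Suc k := s'))
            + H ((ss(Suc k := s')) (Suc k)) ((as(Suc k := a')) (Suc k)) else 0)))
      = (if survives k ss then cum_reward R k ss + policy_bellman \<sigma> R H (ss k) (as k) else 0)"
    for ss as
  proof (cases "survives k ss")
    case True
    have "(if stops_at Sbot (Suc k) (ss(Suc k := s')) then cum_reward R (Suc k) (ss(Suc k := s')) else 0)
       + (if survives (Suc k) (ss(Suc k := s')) then cum_reward R (Suc k) (ss(Suc k := s'))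
            + H ((ss(Suc k := s')) (Suc k)) ((as(Suc k := a')) (Suc k)) else 0)
      = cum_reward R k ss + R s' + (if s' \<notin> Sbot then H s' a' else 0)" for s' a'
      using True by (simp add: stops_at_Suc survives_Suc cum_reward_Suc)
    then show ?thesis
      using True expected_step_eq_policy_bellman[OF assms, of "ss k" "as k" "cum_reward R k ss" R H]
      by simp
  next
    case False
    then show ?thesis by (simp add: stops_at_Suc survives_Suc)
  qed
  have "stopped_exp \<sigma> (\<lambda>n ss as. cum_reward R n ss) (Suc k) + truncated_value \<sigma> R H (Suc k)
      = traj_exp P s0 \<sigma> (Suc k) (\<lambda>ss as.
          (if stops_at Sbot (Suc k) ss then cum_reward R (Suc k) ss else 0)
        + (if survives (Suc k) ss then cum_reward R (Suc k) ss + H (ss (Suc k)) (as (Suc k)) else 0))"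
    unfolding stopped_exp_def truncated_value_def traj_exp_add ..
  also have "\<dots> = truncated_value \<sigma> R (policy_bellman \<sigma> R H) k"
    unfolding traj_exp_Suc truncated_value_def by (rule traj_exp_cong) (rule step)
  finally show ?thesis .
qed

lemma policy_bellman_iterate_eq:
  assumes "is_policy \<sigma>"
  shows "(\<Sum>a\<in>UNIV. \<sigma> s0 a * ((policy_bellman \<sigma> R ^^ k) H) s0 a)
       = (\<Sum>n<Suc k. stopped_exp \<sigma> (\<lambda>n ss as. cum_reward R n ss) n) + truncated_value \<sigma> R H k"
proof (induction k arbitrary: H)
  case 0
  then show ?case by (simp add: truncated_value_0 stopped_exp_def traj_exp_def)
next
  case (Suc k)
  then show ?case
    using truncated_value_Suc[OF assms, of R k H] by (simp add: funpow_Suc_right del: funpow.simps)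
qed

lemma truncated_value_tendsto_0:
  assumes "is_policy \<sigma>" "finite_exp_T P Sbot s0 \<sigma>"
  shows "truncated_value \<sigma> R H \<longlonglongrightarrow> 0"
proof -
  define r where "r = (\<Sum>s\<in>UNIV. \<bar>R s\<bar>)"
  define h where "h = (\<Sum>p\<in>UNIV. \<bar>case_prod H p\<bar>)"
  let ?bound = "\<lambda>N. r * (real N * prob_T_gt P Sbot s0 \<sigma> N) + h * prob_T_gt P Sbot s0 \<sigma> N"
  have "\<bar>truncated_value \<sigma> R H N\<bar>
      \<le> traj_exp P s0 \<sigma> N (\<lambda>ss as. (real N * r + h) * (if survives N ss then 1 else 0))" for N
    unfolding truncated_value_def
  proof (rule traj_exp_abs_le[OF assms(1)])
    show "\<bar>if survives N ss then cum_reward R N ss + H (ss N) (as N) else 0\<bar>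
        \<le> (real N * r + h) * (if survives N ss then 1 else 0)" for ss as
      using cum_reward_abs_le[of R N ss] abs_le_sum_abs[of "case_prod H" "(ss N, as N)"]
      unfolding r_def h_def by auto
  qed
  then have bound: "\<bar>truncated_value \<sigma> R H N\<bar> \<le> ?bound N" for N
    unfolding traj_exp_cmult prob_T_gt_survives[symmetric] by (simp add: algebra_simps)
  have "?bound \<longlonglongrightarrow> r * 0 + h * 0"
    by (intro tendsto_intros nat_mult_prob_T_gt_tendsto_0 prob_T_gt_tendsto_0 assms)
  then have "?bound \<longlonglongrightarrow> 0" by simp
  moreover have "norm (truncated_value \<sigma> R H N) \<le> norm (?bound N) * 1" for N
    using bound[of N] by simp
  ultimately show ?thesis
    by (blast intro: tendsto_0_le[where K = 1] always_eventually)
qed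

theorem J_eq_lim_policy_bellman_iterate:
  assumes "is_policy \<sigma>" "finite_exp_T P Sbot s0 \<sigma>"
  shows "(\<lambda>k. \<Sum>a\<in>UNIV. \<sigma> s0 a * ((policy_bellman \<sigma> R ^^ k) H) s0 a) \<longlonglongrightarrow> J P R Sbot s0 \<sigma>"
proof -
  have "summable (stopped_exp \<sigma> (\<lambda>n ss as. cum_reward R n ss))"
    using cum_reward_abs_le[of R]
    by (intro summable_stopped_exp[OF assms, where c = "\<Sum>s\<in>UNIV. \<bar>R s\<bar>" and d = 0])
       (simp add: mult.commute)
  then have "(\<lambda>k. \<Sum>n<Suc k. stopped_exp \<sigma> (\<lambda>n ss as. cum_reward R n ss) n)
      \<longlonglongrightarrow> J P R Sbot s0 \<sigma>"
    unfolding J_eq_suminf_stopped_exp by (intro LIMSEQ_Suc summable_LIMSEQ)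
  with truncated_value_tendsto_0[OF assms] show ?thesis
    unfolding policy_bellman_iterate_eq[OF assms(1)] using tendsto_add by fastforce
qed

lemma bellman_mono:
  "(\<And>s a. Q s a \<le> Q' s a) \<Longrightarrow> bellman P R Sbot Q s a \<le> bellman P R Sbot Q' s a"
  unfolding bellman_def
  by (intro sum_mono mult_left_mono P_nonneg add_left_mono) (auto intro: vmax_mono)

lemma policy_bellman_mono:
  assumes "is_policy \<sigma>" "\<And>s a. H s a \<le> H' s a"
  shows "policy_bellman \<sigma> R H s a \<le> policy_bellman \<sigma> R H' s a"
  unfolding policy_bellman_def
  by (intro sum_mono mult_left_mono P_nonneg add_left_mono)
     (auto intro!: sum_mono mult_left_mono policy_nonneg assms)

lemma policy_bellman_le_bellman:
  "is_policy \<sigma> \<Longrightarrow> policy_bellman \<sigma> R H s a \<le> bellman P R Sbot H s a"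
  unfolding policy_bellman_def bellman_def
  by (intro sum_mono mult_left_mono P_nonneg add_left_mono) (auto intro: sum_policy_mult_le_vmax)

lemma policy_bellman_greedy:
  assumes "greedy Q \<mu>"
  shows "policy_bellman \<mu> R Q = bellman P R Sbot Q"
  unfolding policy_bellman_def bellman_def sum_greedy_mult_eq_vmax[OF assms] ..

lemma policy_bellman_iterate_le_bellman_iterate:
  assumes "is_policy \<sigma>"
  shows "(policy_bellman \<sigma> R ^^ n) Q s a \<le> (bellman P R Sbot ^^ n) Q s a"
proof (induction n arbitrary: s a)
  case 0
  then show ?case by simp
next
  case (Suc n)
  have "policy_bellman \<sigma> R ((policy_bellman \<sigma> R ^^ n) Q) s a
      \<le> policy_bellman \<sigma> R ((bellman P R Sbot ^^ n) Q) s a"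
    by (rule policy_bellman_mono[OF assms Suc.IH])
  also have "\<dots> \<le> bellman P R Sbot ((bellman P R Sbot ^^ n) Q) s a"
    by (rule policy_bellman_le_bellman[OF assms])
  finally show ?case by simp
qed

definition bellman_subsolution :: "('s \<Rightarrow> real) \<Rightarrow> ('s \<Rightarrow> 'a \<Rightarrow> real) \<Rightarrow> bool" where
  "bellman_subsolution R Q \<longleftrightarrow> (\<forall>s a. Q s a \<le> bellman P R Sbot Q s a)"

lemma bellman_subsolution_iterate:
  assumes "bellman_subsolution R Q"
  shows "bellman_subsolution R ((bellman P R Sbot ^^ n) Q)"
proof (induction n)
  case 0
  then show ?case using assms by simp
next
  case (Suc n)
  then show ?case
    unfolding bellman_subsolution_def funpow.simps comp_def by (blast intro: bellman_mono)
qed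

\<comment> \<open>For a greedy policy the iterates start at Q and increase, since the first step is B Q \<ge> Q.\<close>
lemma bellman_le_greedy_iterate:
  assumes "greedy Q \<mu>" "bellman_subsolution R Q"
  shows "bellman P R Sbot Q s a \<le> (policy_bellman \<mu> R ^^ Suc n) Q s a"
proof -
  have policy: "is_policy \<mu>"
    using assms(1) unfolding greedy_def by simp
  have "Q s a \<le> (policy_bellman \<mu> R ^^ n) Q s a" for n s a
  proof (induction n arbitrary: s a)
    case 0
    then show ?case by simp
  next
    case (Suc n)
    have "Q s a \<le> policy_bellman \<mu> R Q s a"
      using assms unfolding bellman_subsolution_def policy_bellman_greedy[OF assms(1)] by simp
    also have "\<dots> \<le> policy_bellman \<mu> R ((policy_bellman \<mu> R ^^ n) Q) s a"
      by (rule policy_bellman_mono[OF policy Suc.IH])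
    finally show ?case by simp
  qed
  then have "policy_bellman \<mu> R Q s a \<le> policy_bellman \<mu> R ((policy_bellman \<mu> R ^^ n) Q) s a"
    by (rule policy_bellman_mono[OF policy])
  then show ?thesis
    unfolding policy_bellman_greedy[OF assms(1)] by simp
qed

end

locale episodic_reset = episodic_mdp P Sbot s0
  for P :: "'s::finite \<Rightarrow> 'a::finite \<Rightarrow> 's \<Rightarrow> real" and Sbot s0 +
  fixes \<rho> :: "'s \<Rightarrow> real"
  assumes reset: "\<And>s a s'. s \<in> Sbot \<Longrightarrow> P s a s' = \<rho> s'"
    and s0_terminal: "s0 \<in> Sbot"
begin

definition reset_value :: "('s \<Rightarrow> real) \<Rightarrow> ('s \<Rightarrow> 'a \<Rightarrow> real) \<Rightarrow> real" where
  "reset_value R Q = (\<Sum>s'\<in>UNIV. \<rho> s' * (R s' + (if s' \<notin> Sbot then vmax Q s' else 0)))"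

lemma bellman_terminal: "s \<in> Sbot \<Longrightarrow> bellman P R Sbot Q s a = reset_value R Q"
  unfolding bellman_def reset_value_def by (simp add: reset)

context
  fixes \<sigma> :: "'s \<Rightarrow> 'a \<Rightarrow> real"
  assumes policy: "is_policy \<sigma>" and finite_T: "finite_exp_T P Sbot s0 \<sigma>"
begin

lemma L_obj_le_reset_value:
  assumes "bellman_subsolution R Q"
  shows "L_obj P Sbot s0 \<sigma> Q \<le> reset_value R Q"
proof -
  have "Q s a \<le> reset_value R Q" if "s \<in> Sbot" for s a
    using assms bellman_terminal[OF that] unfolding bellman_subsolution_def by metis
  then have "stopped_exp \<sigma> (\<lambda>n ss as. Q (ss n) (as n)) n \<le> reset_value R Q * prob_T_eq \<sigma> n" for n
    by (intro stopped_exp_le[OF policy]) (simp add: stops_at_def)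
  moreover have "summable (stopped_exp \<sigma> (\<lambda>n ss as. Q (ss n) (as n)))"
    using abs_le_sum_abs[of "case_prod Q"]
    by (intro summable_stopped_exp[OF policy finite_T, where c = 0]) auto
  moreover have sums: "(\<lambda>n. reset_value R Q * prob_T_eq \<sigma> n) sums (reset_value R Q * 1)"
    by (intro sums_mult prob_T_eq_sums_1[OF policy finite_T])
  ultimately have "suminf (stopped_exp \<sigma> (\<lambda>n ss as. Q (ss n) (as n)))
      \<le> (\<Sum>n. reset_value R Q * prob_T_eq \<sigma> n)"
    by (intro suminf_le sums_summable[OF sums])
  then show ?thesis
    unfolding L_obj_eq_suminf_stopped_exp sums_unique[OF sums, symmetric] by simp
qed

lemma L_obj_bellman: "L_obj P Sbot s0 \<sigma> (bellman P R Sbot Q) = reset_value R Q"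
proof -
  have "stopped_exp \<sigma> (\<lambda>n ss as. bellman P R Sbot Q (ss n) (as n))
      = (\<lambda>n. reset_value R Q * prob_T_eq \<sigma> n)"
    unfolding stopped_exp_def prob_T_eq_def traj_exp_cmult[symmetric]
    by (intro ext traj_exp_cong) (simp add: bellman_terminal stops_at_def)
  moreover have "(\<lambda>n. reset_value R Q * prob_T_eq \<sigma> n) sums (reset_value R Q * 1)"
    by (intro sums_mult prob_T_eq_sums_1[OF policy finite_T])
  ultimately show ?thesis
    unfolding L_obj_eq_suminf_stopped_exp by (simp add: sums_iff)
qed

lemma J_le_of_reset_value_iterate_le:
  assumes "\<And>n. reset_value R ((bellman P R Sbot ^^ n) Q) \<le> c"
  shows "J P R Sbot s0 \<sigma> \<le> c"
proof (rule LIMSEQ_le_const2)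
  show "(\<lambda>n. \<Sum>a\<in>UNIV. \<sigma> s0 a * ((policy_bellman \<sigma> R ^^ Suc n) Q) s0 a) \<longlonglongrightarrow> J P R Sbot s0 \<sigma>"
    by (rule LIMSEQ_Suc[OF J_eq_lim_policy_bellman_iterate[OF policy finite_T]])
  show "\<exists>N. \<forall>n\<ge>N. (\<Sum>a\<in>UNIV. \<sigma> s0 a * ((policy_bellman \<sigma> R ^^ Suc n) Q) s0 a) \<le> c"
  proof (intro exI allI impI)
    fix n
    have "(\<Sum>a\<in>UNIV. \<sigma> s0 a * ((policy_bellman \<sigma> R ^^ Suc n) Q) s0 a)
        \<le> (\<Sum>a\<in>UNIV. \<sigma> s0 a * ((bellman P R Sbot ^^ Suc n) Q) s0 a)"
      by (intro sum_mono mult_left_mono policy_nonneg[OF policy]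
          policy_bellman_iterate_le_bellman_iterate[OF policy])
    also have "\<dots> = reset_value R ((bellman P R Sbot ^^ n) Q)"
      by (simp add: bellman_terminal[OF s0_terminal] sum_policy_mult_const[OF policy])
    also have "\<dots> \<le> c"
      by (rule assms)
    finally show "(\<Sum>a\<in>UNIV. \<sigma> s0 a * ((policy_bellman \<sigma> R ^^ Suc n) Q) s0 a) \<le> c" .
  qed
qed

lemma reset_value_iterate_le:
  assumes sub: "bellman_subsolution R Q"
    and maximin: "\<And>Q'. bellman_subsolution R Q' \<Longrightarrow> L_obj P Sbot s0 \<sigma> Q' \<le> L_obj P Sbot s0 \<sigma> Q"
  shows "reset_value R ((bellman P R Sbot ^^ n) Q) \<le> reset_value R Q"
proof -
  have "reset_value R ((bellman P R Sbot ^^ n) Q) = L_obj P Sbot s0 \<sigma> ((bellman P R Sbot ^^ Suc n) Q)"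
    by (simp add: L_obj_bellman)
  also have "\<dots> \<le> L_obj P Sbot s0 \<sigma> Q"
    by (intro maximin bellman_subsolution_iterate sub)
  also have "\<dots> \<le> reset_value R Q"
    by (rule L_obj_le_reset_value[OF sub])
  finally show ?thesis .
qed

end

lemma reset_value_le_J_greedy:
  assumes "greedy Q \<mu>" "bellman_subsolution R Q" "finite_exp_T P Sbot s0 \<mu>"
  shows "reset_value R Q \<le> J P R Sbot s0 \<mu>"
proof (rule LIMSEQ_le_const)
  have policy: "is_policy \<mu>"
    using assms(1) unfolding greedy_def by simp
  show "(\<lambda>n. \<Sum>a\<in>UNIV. \<mu> s0 a * ((policy_bellman \<mu> R ^^ Suc n) Q) s0 a) \<longlonglongrightarrow> J P R Sbot s0 \<mu>"
    by (rule LIMSEQ_Suc[OF J_eq_lim_policy_bellman_iterate[OF policy assms(3)]])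
  show "\<exists>N. \<forall>n\<ge>N. reset_value R Q \<le> (\<Sum>a\<in>UNIV. \<mu> s0 a * ((policy_bellman \<mu> R ^^ Suc n) Q) s0 a)"
  proof (intro exI allI impI)
    fix n
    have "reset_value R Q = (\<Sum>a\<in>UNIV. \<mu> s0 a * bellman P R Sbot Q s0 a)"
      by (simp add: bellman_terminal[OF s0_terminal] sum_policy_mult_const[OF policy])
    also have "\<dots> \<le> (\<Sum>a\<in>UNIV. \<mu> s0 a * ((policy_bellman \<mu> R ^^ Suc n) Q) s0 a)"
      by (intro sum_mono mult_left_mono policy_nonneg[OF policy] bellman_le_greedy_iterate assms(1,2))
    finally show "reset_value R Q \<le> (\<Sum>a\<in>UNIV. \<mu> s0 a * ((policy_bellman \<mu> R ^^ Suc n) Q) s0 a)" .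
  qed
qed

end

theorem mainTheorem10:
  fixes P :: "'s::finite \<Rightarrow> 'a::finite \<Rightarrow> 's \<Rightarrow> real"
    and R :: "'s \<Rightarrow> real" and \<rho> :: "'s \<Rightarrow> real" and Sbot :: "'s set" and s0 :: 's
    and \<pi> \<mu> :: "'s \<Rightarrow> 'a \<Rightarrow> real" and Qmax :: "'s \<Rightarrow> 'a \<Rightarrow> real"
  assumes elp: "is_ELP P \<rho> Sbot s0"
    and pol: "is_policy \<pi>"
    and feas: "\<forall>s a. Qmax s a \<le> bellman P R Sbot Qmax s a"
    and opt: "\<forall>Q. (\<forall>s a. Q s a \<le> bellman P R Sbot Q s a)
                  \<longrightarrow> L_obj P Sbot s0 \<pi> Q \<le> L_obj P Sbot s0 \<pi> Qmax"
    and gr: "greedy Qmax \<mu>"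
  shows "\<forall>\<pi>'. is_policy \<pi>' \<longrightarrow> J P R Sbot s0 \<pi>' \<le> J P R Sbot s0 \<mu>"
proof (intro allI impI)
  fix \<pi>' :: "'s \<Rightarrow> 'a \<Rightarrow> real"
  assume pol': "is_policy \<pi>'"
  interpret episodic_reset P Sbot s0 \<rho>
    using elp unfolding is_ELP_def by unfold_locales auto
  have finite_T: "finite_exp_T P Sbot s0 \<sigma>" if "is_policy \<sigma>" for \<sigma>
    using elp that unfolding is_ELP_def by blast
  have sub: "bellman_subsolution R Qmax"
    using feas unfolding bellman_subsolution_def .
  have "reset_value R ((bellman P R Sbot ^^ n) Qmax) \<le> reset_value R Qmax" for n
    using opt by (intro reset_value_iterate_le[OF pol finite_T[OF pol] sub])
                 (simp add: bellman_subsolution_def)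
  then have "J P R Sbot s0 \<pi>' \<le> reset_value R Qmax"
    by (rule J_le_of_reset_value_iterate_le[OF pol' finite_T[OF pol']])
  also have "\<dots> \<le> J P R Sbot s0 \<mu>"
    using gr unfolding greedy_def by (intro reset_value_le_J_greedy[OF gr sub] finite_T) simp
  finally show "J P R Sbot s0 \<pi>' \<le> J P R Sbot s0 \<mu>" .
qed

end
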